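(* Let $K$ satisfy $m:=\binom K2\ge8$, and let $\Omega=\{0,1\}^{\binom{[K]}{2}}$ (vectors indexed by 2-element subsets of $[K]$) with Hamming distance $d_H$. For a permutation $\sigma$ of $[K]$ and $\omega\in\Omega$ define $T_\sigma(\omega)\in\Omega$ by $T_\sigma(\omega)_{\{k,k'\}}=\omega_{\{\sigma(k),\sigma(k')\}}$. Then there exists $\Omega''\subseteq\Omega$ such that $\mathbf 0\in\Omega''$, for all distinct $\omega_1,\omega_2\in\Omega''$ $$\min_{\sigma}d_H(T_\sigma(\omega_1),\omega_2)\ge\frac{1}{17}\binom K2,$$ the minimum being over all permutations of $[K]$, and $|\Omega''|\ge1+2^{\frac18\binom K2}/K!$.
   Context: $d_H(\omega,\omega')$ is the number of coordinates in which $\omega$ and $\omega'$ differ. (For the matrix $\mathtt B(\omega)$ with $\mathtt B_{kk}=1/2$, $\mathtt B_{kk'}=1/4+\omega_{\{k,k'\}}\mu/n$, the map $T_\sigma$ corresponds to conjugation $\mathtt B(\omega)\mapsto\Pi\mathtt B(\omega)\Pi^{\mathrm T}$ by a permutation matrix.) *)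

theory Defs
  imports Complex_Main "HOL-Combinatorics.Permutations"
begin

definition pairs :: "nat \<Rightarrow> nat set set" where
  "pairs K = {e. e \<subseteq> {1..K} \<and> card e = 2}"

definition Omega :: "nat \<Rightarrow> (nat set \<Rightarrow> nat) set" where
  "Omega K = {w. (\<forall>e\<in>pairs K. w e \<in> {0,1}) \<and> (\<forall>e. e \<notin> pairs K \<longrightarrow> w e = 0)}"

definition zeroVec :: "nat set \<Rightarrow> nat" where
  "zeroVec = (\<lambda>e. 0)"

definition dH :: "nat \<Rightarrow> (nat set \<Rightarrow> nat) \<Rightarrow> (nat set \<Rightarrow> nat) \<Rightarrow> nat" where
  "dH K w w' = card {e \<in> pairs K. w e \<noteq> w' e}"

definition Tperm :: "nat \<Rightarrow> (nat \<Rightarrow> nat) \<Rightarrow> (nat set \<Rightarrow> nat) \<Rightarrow> (nat set \<Rightarrow> nat)" where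
  "Tperm K \<sigma> w = (\<lambda>e. if e \<in> pairs K then w (\<sigma> ` e) else 0)"

end

theory Submission imports Defs begin

text \<open>
Call \<open>w\<^sub>1\<close> and \<open>w\<^sub>2\<close> close if some relabelling \<open>T\<^sub>\<sigma> w\<^sub>1\<close> lies at Hamming distance
\<open>< m/17\<close> from \<open>w\<^sub>2\<close>, where \<open>m = K choose 2\<close>. A Hamming ball of radius \<open>t\<close> in \<open>{0,1}\<^sup>m\<close>
has at most \<open>(17/16)\<^sup>m 16\<^sup>t\<close> points (weight each point of the ball by \<open>16\<^bsup>t - d\<^esup> \<ge> 1\<close>
and sum over the whole cube), so every vector has at most \<open>2 K! (17/16)\<^sup>m 16\<^bsup>m/17\<^esup>\<close>
close neighbours. A greedy maximal set of pairwise non-close vectors containing \<open>0\<close>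
therefore has at least \<open>2\<^sup>m\<close> divided by that degree bound (plus one) elements, which
beats \<open>1 + 2\<^bsup>m/8\<^esup>/K!\<close> once \<open>m \<ge> 8\<close>. When \<open>2\<^bsup>m/8\<^esup> \<le> K!\<close> the set \<open>{0, 1}\<close> already
suffices, since both constant vectors are fixed by every \<open>T\<^sub>\<sigma>\<close>.
\<close>

lemma exists_independent_set_card_ge:
  fixes U :: "'a set" and R :: "'a \<Rightarrow> 'a \<Rightarrow> bool" and B :: real
  assumes fin: "finite U" and x0: "x0 \<in> U"
    and deg: "\<And>x. x \<in> U \<Longrightarrow> real (card {y\<in>U. y \<noteq> x \<and> (R x y \<or> R y x)}) \<le> B"
  shows "\<exists>S\<subseteq>U. x0 \<in> S \<and> (\<forall>a\<in>S. \<forall>b\<in>S. a \<noteq> b \<longrightarrow> \<not> R a b)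
           \<and> real (card U) \<le> real (card S) * (B + 1)"
proof -
  let ?P = "\<lambda>S. S \<subseteq> U \<and> x0 \<in> S \<and> (\<forall>a\<in>S. \<forall>b\<in>S. a \<noteq> b \<longrightarrow> \<not> R a b)"
  have P0: "?P {x0}" using x0 by auto
  have bounded: "\<forall>S. ?P S \<longrightarrow> card S < card U + 1"
    using fin by (auto simp: less_Suc_eq_le card_mono)
  obtain S where PS: "?P S" and max: "\<And>T. ?P T \<Longrightarrow> card T \<le> card S"
    using ex_has_greatest_nat[OF P0 bounded] by blast
  define N where "N x = {y\<in>U. y \<noteq> x \<and> (R x y \<or> R y x)}" for x
  have finS: "finite S" using PS fin finite_subset by blast
  have cover: "U \<subseteq> S \<union> (\<Union>s\<in>S. N s)"
  proof
    fix y assume y: "y \<in> U"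
    show "y \<in> S \<union> (\<Union>s\<in>S. N s)"
    proof (rule ccontr)
      assume y_new: "y \<notin> S \<union> (\<Union>s\<in>S. N s)"
      then have "?P (insert y S)" using PS y unfolding N_def by auto
      then have "card (insert y S) \<le> card S" by (rule max)
      moreover have "card (insert y S) = Suc (card S)" using finS y_new by simp
      ultimately show False by simp
    qed
  qed
  have "card U \<le> card (S \<union> (\<Union>s\<in>S. N s))"
    using cover fin finS by (intro card_mono) (auto simp: N_def)
  also have "\<dots> \<le> card S + card (\<Union>s\<in>S. N s)" by (rule card_Un_le)
  also have "\<dots> \<le> card S + (\<Sum>s\<in>S. card (N s))" by (intro add_left_mono card_UN_le[OF finS])
  finally have "real (card U) \<le> real (card S) + (\<Sum>s\<in>S. real (card (N s)))"
    unfolding of_nat_sum[symmetric] of_nat_add[symmetric] of_nat_le_iff .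
  also have "(\<Sum>s\<in>S. real (card (N s))) \<le> (\<Sum>s\<in>S. B)"
    using PS deg by (intro sum_mono) (auto simp: N_def)
  finally have "real (card U) \<le> real (card S) * (B + 1)" by (simp add: algebra_simps)
  then show ?thesis using PS by blast
qed

lemma sum_Pow_power_card:
  fixes x :: "'a :: comm_semiring_1"
  assumes "finite A"
  shows "(\<Sum>X\<in>Pow A. x ^ card X) = (1 + x) ^ card A"
  using prod_add[OF assms, of "\<lambda>_. x" "\<lambda>_. 1"] by (simp add: add.commute)

lemma finite_pairs: "finite (pairs K)"
  unfolding pairs_def by (rule finite_subset[of _ "Pow {1..K}"]) auto

lemma card_pairs: "card (pairs K) = K choose 2"
  unfolding pairs_def using n_subsets[of "{1..K}" 2] by simp

lemma permutes_image_pairs: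
  assumes "\<sigma> permutes {1..K}" "e \<in> pairs K"
  shows "\<sigma> ` e \<in> pairs K"
proof -
  have "inj_on \<sigma> e" using permutes_inj[OF assms(1)] by (auto intro: inj_on_subset)
  then show ?thesis using assms permutes_image[OF assms(1)] unfolding pairs_def
    by (auto simp: card_image dest: permutes_in_image[OF assms(1), THEN iffD2])
qed

lemma zeroVec_in_Omega: "zeroVec \<in> Omega K"
  unfolding Omega_def zeroVec_def by auto

lemma finite_Omega: "finite (Omega K)"
proof -
  have "Omega K \<subseteq> (\<lambda>D e. if e \<in> D then 1 else 0) ` Pow (pairs K)"
  proof
    fix w assume w: "w \<in> Omega K"
    then have "w = (\<lambda>e. if e \<in> {e\<in>pairs K. w e = 1} then 1 else 0)"
      unfolding Omega_def by force
    then show "w \<in> (\<lambda>D e. if e \<in> D then 1 else 0) ` Pow (pairs K)" by blast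
  qed
  then show ?thesis using finite_pairs by (meson finite_Pow_iff finite_imageI finite_subset)
qed

lemma card_Omega_ge: "2 ^ (K choose 2) \<le> card (Omega K)"
proof -
  let ?f = "\<lambda>D e. if e \<in> D then 1 else (0::nat)"
  have "inj_on ?f (Pow (pairs K))"
  proof (rule inj_onI)
    fix A B assume "?f A = ?f B"
    then have "\<And>e. (e \<in> A) = (e \<in> B)" by (metis zero_neq_one)
    then show "A = B" by blast
  qed
  moreover have "?f ` Pow (pairs K) \<subseteq> Omega K" unfolding Omega_def by auto
  ultimately have "card (Pow (pairs K)) \<le> card (Omega K)"
    using card_inj_on_le finite_Omega by blast
  then show ?thesis using card_Pow[OF finite_pairs] card_pairs by simp
qed

lemma Tperm_in_Omega:
  assumes "\<sigma> permutes {1..K}" "w \<in> Omega K"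
  shows "Tperm K \<sigma> w \<in> Omega K"
  using assms permutes_image_pairs[OF assms(1)] unfolding Omega_def Tperm_def by auto

lemma inj_on_Tperm:
  assumes \<sigma>: "\<sigma> permutes {1..K}"
  shows "inj_on (Tperm K \<sigma>) (Omega K)"
proof (rule inj_onI)
  fix w1 w2 assume w: "w1 \<in> Omega K" "w2 \<in> Omega K" and eq: "Tperm K \<sigma> w1 = Tperm K \<sigma> w2"
  show "w1 = w2"
  proof
    fix e
    show "w1 e = w2 e"
    proof (cases "e \<in> pairs K")
      case False
      then show ?thesis using w unfolding Omega_def by auto
    next
      case True
      let ?e = "inv \<sigma> ` e"
      have "?e \<in> pairs K" using permutes_image_pairs[OF permutes_inv[OF \<sigma>] True] .
      moreover have "\<sigma> ` ?e = e" using permutes_inverses(1)[OF \<sigma>] by (auto simp: image_iff)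
      ultimately show ?thesis using fun_cong[OF eq, of ?e] unfolding Tperm_def by simp
    qed
  qed
qed

lemma dH_commute: "dH K w w' = dH K w' w"
  unfolding dH_def by (metis (full_types))

lemma card_Hamming_ball_le:
  fixes c t :: real
  assumes z: "z \<in> Omega K" and c: "1 \<le> c"
  shows "real (card {y\<in>Omega K. real (dH K z y) < t}) \<le> (1 + 1/c) ^ (K choose 2) * c powr t"
proof -
  let ?ball = "{y\<in>Omega K. real (dH K z y) < t}"
  let ?diff = "\<lambda>y. {e\<in>pairs K. z e \<noteq> y e}"
  let ?small = "{D\<in>Pow (pairs K). real (card D) < t}"
  have "inj_on ?diff ?ball"
  proof (rule inj_onI)
    fix y1 y2 assume y: "y1 \<in> ?ball" "y2 \<in> ?ball" and eq: "?diff y1 = ?diff y2"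
    show "y1 = y2"
    proof
      fix e
      show "y1 e = y2 e"
      proof (cases "e \<in> pairs K")
        case True
        then have "y1 e \<in> {0,1}" "y2 e \<in> {0,1}" "z e \<in> {0,1}"
          using y z unfolding Omega_def by auto
        moreover have "(z e \<noteq> y1 e) = (z e \<noteq> y2 e)" using eq True by blast
        ultimately show ?thesis by auto
      qed (use y in \<open>auto simp: Omega_def\<close>)
    qed
  qed
  moreover have "?diff ` ?ball \<subseteq> ?small" by (auto simp: dH_def)
  ultimately have "card ?ball \<le> card ?small"
    using finite_pairs by (intro card_inj_on_le) auto
  then have "real (card ?ball) \<le> (\<Sum>D\<in>?small. 1)" by simp
  also have "\<dots> \<le> (\<Sum>D\<in>?small. c powr t * (1/c) ^ card D)"
  proof (rule sum_mono)
    fix D assume "D \<in> ?small"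
    then have "1 \<le> c powr (t - real (card D))" using c by (intro ge_one_powr_ge_zero) auto
    then show "1 \<le> c powr t * (1/c) ^ card D"
      using c by (simp add: powr_diff powr_realpow power_one_over)
  qed
  also have "\<dots> \<le> (\<Sum>D\<in>Pow (pairs K). c powr t * (1/c) ^ card D)"
    using finite_pairs c by (intro sum_mono2) auto
  also have "\<dots> = c powr t * (1 + 1/c) ^ card (pairs K)"
    by (simp only: sum_distrib_left[symmetric] sum_Pow_power_card[OF finite_pairs])
  also have "\<dots> = (1 + 1/c) ^ (K choose 2) * c powr t" by (simp add: card_pairs)
  finally show ?thesis .
qed

definition orbit_close :: "nat \<Rightarrow> real \<Rightarrow> (nat set \<Rightarrow> nat) \<Rightarrow> (nat set \<Rightarrow> nat) \<Rightarrow> bool" where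
  "orbit_close K t w1 w2 \<longleftrightarrow> (\<exists>\<sigma>. \<sigma> permutes {1..K} \<and> real (dH K (Tperm K \<sigma> w1) w2) < t)"

definition orbit_separated :: "nat \<Rightarrow> real \<Rightarrow> (nat set \<Rightarrow> nat) set \<Rightarrow> bool" where
  "orbit_separated K t S \<longleftrightarrow> (\<forall>w1\<in>S. \<forall>w2\<in>S. w1 \<noteq> w2 \<longrightarrow>
     t \<le> real (Min {dH K (Tperm K \<sigma> w1) w2 | \<sigma>. \<sigma> permutes {1..K}}))"

lemma le_Min_dH_Tperm:
  assumes "\<not> orbit_close K t w1 w2"
  shows "t \<le> real (Min {dH K (Tperm K \<sigma> w1) w2 | \<sigma>. \<sigma> permutes {1..K}})"
proof -
  let ?D = "{dH K (Tperm K \<sigma> w1) w2 | \<sigma>. \<sigma> permutes {1..K}}"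
  have "?D = (\<lambda>\<sigma>. dH K (Tperm K \<sigma> w1) w2) ` {\<sigma>. \<sigma> permutes {1..K}}" by blast
  then have "finite ?D" by (simp add: finite_permutations)
  moreover have "?D \<noteq> {}" using permutes_id by blast
  ultimately have "Min ?D \<in> ?D" by (rule Min_in)
  then show ?thesis using assms unfolding orbit_close_def by (auto simp: not_less)
qed

lemma card_orbit_close_le:
  fixes t :: real
  assumes x: "x \<in> Omega K"
  shows "real (card {y\<in>Omega K. y \<noteq> x \<and> (orbit_close K t x y \<or> orbit_close K t y x)})
    \<le> 2 * fact K * ((17/16) ^ (K choose 2) * 16 powr t)"
proof -
  let ?V = "(17/16) ^ (K choose 2) * 16 powr t :: real"
  let ?\<Pi> = "{\<sigma>. \<sigma> permutes {1..K}}"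
  define A where "A \<sigma> = {y\<in>Omega K. real (dH K (Tperm K \<sigma> x) y) < t}" for \<sigma>
  define C where "C \<sigma> = {y\<in>Omega K. real (dH K (Tperm K \<sigma> y) x) < t}" for \<sigma>
  have ball: "real (card {y\<in>Omega K. real (dH K z y) < t}) \<le> ?V" if "z \<in> Omega K" for z
    using card_Hamming_ball_le[OF that, of 16 t] by simp
  have card_A: "real (card (A \<sigma>)) \<le> ?V" if "\<sigma> permutes {1..K}" for \<sigma>
    unfolding A_def by (rule ball[OF Tperm_in_Omega[OF that x]])
  have card_C: "real (card (C \<sigma>)) \<le> ?V" if \<sigma>: "\<sigma> permutes {1..K}" for \<sigma>
  proof -
    have "inj_on (Tperm K \<sigma>) (C \<sigma>)"
      using inj_on_Tperm[OF \<sigma>] by (rule inj_on_subset) (auto simp: C_def)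
    moreover have "Tperm K \<sigma> ` C \<sigma> \<subseteq> {z\<in>Omega K. real (dH K x z) < t}"
      using Tperm_in_Omega[OF \<sigma>] dH_commute[of K x] unfolding C_def by fastforce
    ultimately have "card (C \<sigma>) \<le> card {z\<in>Omega K. real (dH K x z) < t}"
      by (rule card_inj_on_le) (simp add: finite_Omega)
    then show ?thesis using ball[OF x] by linarith
  qed
  have "{y\<in>Omega K. y \<noteq> x \<and> (orbit_close K t x y \<or> orbit_close K t y x)}
      \<subseteq> (\<Union>\<sigma>\<in>?\<Pi>. A \<sigma>) \<union> (\<Union>\<sigma>\<in>?\<Pi>. C \<sigma>)"
    unfolding orbit_close_def A_def C_def by auto
  then have "card {y\<in>Omega K. y \<noteq> x \<and> (orbit_close K t x y \<or> orbit_close K t y x)}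
      \<le> card ((\<Union>\<sigma>\<in>?\<Pi>. A \<sigma>) \<union> (\<Union>\<sigma>\<in>?\<Pi>. C \<sigma>))"
    by (rule card_mono[rotated]) (auto intro: finite_subset[OF _ finite_Omega] simp: A_def C_def)
  also have "\<dots> \<le> (\<Sum>\<sigma>\<in>?\<Pi>. card (A \<sigma>)) + (\<Sum>\<sigma>\<in>?\<Pi>. card (C \<sigma>))"
    by (intro order.trans[OF card_Un_le] add_mono card_UN_le) (simp_all add: finite_permutations)
  finally have "real (card {y\<in>Omega K. y \<noteq> x \<and> (orbit_close K t x y \<or> orbit_close K t y x)})
      \<le> (\<Sum>\<sigma>\<in>?\<Pi>. real (card (A \<sigma>))) + (\<Sum>\<sigma>\<in>?\<Pi>. real (card (C \<sigma>)))"
    unfolding of_nat_sum[symmetric] of_nat_add[symmetric] of_nat_le_iff .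
  also have "\<dots> \<le> (\<Sum>\<sigma>\<in>?\<Pi>. ?V) + (\<Sum>\<sigma>\<in>?\<Pi>. ?V)"
    using card_A card_C by (intro add_mono sum_mono) auto
  also have "\<dots> = 2 * fact K * ?V"
    using card_permutations[of "{1..K}" K] by simp
  finally show ?thesis .
qed

lemma seventeen_sixteenths_power_le: "(17/16::real) ^ m \<le> 2 powr (real m / 8)"
proof -
  have "(2 powr (1/8::real)) ^ 8 = 2 powr (real 8 * (1/8))"
    by (subst powr_realpow[symmetric]) (auto simp: powr_powr mult.commute)
  moreover have "(17/16::real) ^ 8 \<le> 2" by (simp add: power_divide)
  ultimately have "(17/16::real) ^ 8 \<le> (2 powr (1/8)) ^ 8" by simp
  then have base: "(17/16::real) \<le> 2 powr (1/8)"
    by (subst (asm) power_mono_iff) auto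
  have "(17/16::real) ^ m = (17/16) powr real m" by (simp add: powr_realpow)
  also have "\<dots> \<le> (2 powr (1/8)) powr real m" using base by (intro powr_mono2) auto
  also have "\<dots> = 2 powr (real m / 8)" by (simp add: powr_powr)
  finally show ?thesis .
qed

lemma degree_bound_le_power_two:
  assumes "8 \<le> m"
  shows "6 * 2 powr (real m / 8) * ((17/16) ^ m * 16 powr (real m / 17)) \<le> (2::real) ^ m"
proof -
  have "(16::real) powr (real m / 17) = (2 powr 4) powr (real m / 17)" by simp
  also have "\<dots> = 2 powr (4 * real m / 17)" by (subst powr_powr) simp
  finally have "6 * 2 powr (real m / 8) * ((17/16) ^ m * 16 powr (real m / 17))
      \<le> 6 * 2 powr (real m / 8) * (2 powr (real m / 8) * 2 powr (4 * real m / 17))"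
    using seventeen_sixteenths_power_le[of m] by simp
  also have "\<dots> = 6 * 2 powr (33 * real m / 68)" by (simp add: powr_add[symmetric])
  also have "\<dots> \<le> 2 powr (35 * real m / 68) * 2 powr (33 * real m / 68)"
  proof -
    have "(6::real) \<le> 2 powr 4" by simp
    also have "\<dots> \<le> 2 powr (35 * real m / 68)" using assms by (intro powr_mono) auto
    finally show ?thesis by simp
  qed
  also have "\<dots> = 2 ^ m" by (simp add: powr_add[symmetric] powr_realpow)
  finally show ?thesis .
qed

lemma exists_two_point_orbit_separated:
  assumes "0 < K choose 2" and "t \<le> real (K choose 2)"
  shows "\<exists>S\<subseteq>Omega K. zeroVec \<in> S \<and> orbit_separated K t S \<and> card S = 2"
proof -
  define full where "full = (\<lambda>e. if e \<in> pairs K then 1 else (0::nat))"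
  obtain e where "e \<in> pairs K" using assms(1) card_pairs[of K] by fastforce
  then have "zeroVec e \<noteq> full e" unfolding zeroVec_def full_def by simp
  then have distinct: "zeroVec \<noteq> full" by metis
  have full: "full \<in> Omega K" unfolding Omega_def full_def by auto
  have fixed: "Tperm K \<sigma> w = w" if "\<sigma> permutes {1..K}" "w \<in> {zeroVec, full}" for \<sigma> w
    using that(2) permutes_image_pairs[OF that(1)] unfolding Tperm_def zeroVec_def full_def
    by (auto simp: fun_eq_iff)
  have dist: "dH K w1 w2 = K choose 2"
    if "w1 \<in> {zeroVec, full}" "w2 \<in> {zeroVec, full}" "w1 \<noteq> w2" for w1 w2
  proof -
    have "{e \<in> pairs K. w1 e \<noteq> w2 e} = pairs K"
      using that unfolding zeroVec_def full_def by auto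
    then show ?thesis unfolding dH_def by (simp add: card_pairs)
  qed
  have "\<not> orbit_close K t w1 w2"
    if "w1 \<in> {zeroVec, full}" "w2 \<in> {zeroVec, full}" "w1 \<noteq> w2" for w1 w2
    using fixed[OF _ that(1)] dist[OF that] assms(2) unfolding orbit_close_def by auto
  then have "orbit_separated K t {zeroVec, full}"
    unfolding orbit_separated_def using le_Min_dH_Tperm by blast
  then show ?thesis
    using distinct full zeroVec_in_Omega by (intro exI[of _ "{zeroVec, full}"]) auto
qed

lemma exists_large_orbit_separated:
  fixes K m :: nat
  defines "m \<equiv> K choose 2"
  assumes m: "8 \<le> m" and small_fact: "fact K < 2 powr (real m / 8)"
  shows "\<exists>S\<subseteq>Omega K. zeroVec \<in> S \<and> orbit_separated K (real m / 17) S
           \<and> 1 + 2 powr (real m / 8) / fact K \<le> real (card S)"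
proof -
  define F :: real where "F = fact K"
  define a where "a = (2::real) powr (real m / 8)"
  define V where "V = (17/16) ^ m * 16 powr (real m / 17 :: real)"
  have F: "1 \<le> F" unfolding F_def by simp
  have "1 \<le> (17/16::real) ^ m" "1 \<le> (16::real) powr (real m / 17)"
    by (auto intro: one_le_power ge_one_powr_ge_zero)
  then have V: "1 \<le> V" unfolding V_def by (metis mult_mono' mult_1 zero_le_one)
  have FV: "1 \<le> F * V" using F V by (metis mult_mono' mult_1 zero_le_one)
  have degree: "real (card {y\<in>Omega K. y \<noteq> x \<and>
      (orbit_close K (real m / 17) x y \<or> orbit_close K (real m / 17) y x)}) \<le> 2 * F * V"
    if "x \<in> Omega K" for x
    unfolding F_def V_def m_def using that by (rule card_orbit_close_le)
  obtain S where S: "S \<subseteq> Omega K" "zeroVec \<in> S"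
    and indep: "\<forall>x\<in>S. \<forall>y\<in>S. x \<noteq> y \<longrightarrow> \<not> orbit_close K (real m / 17) x y"
    and card_S: "real (card (Omega K)) \<le> real (card S) * (2 * F * V + 1)"
    using exists_independent_set_card_ge[OF finite_Omega zeroVec_in_Omega degree] by blast
  have "(1 + a / F) * (2 * F * V + 1) \<le> (2 * a / F) * (3 * F * V)"
  proof (rule mult_mono)
    show "1 + a / F \<le> 2 * a / F" using small_fact F by (simp add: field_simps a_def F_def)
    show "2 * F * V + 1 \<le> 3 * F * V" using FV by (simp add: algebra_simps)
  qed (use F V in \<open>auto simp: a_def\<close>)
  also have "\<dots> = 6 * a * V" using F by (simp add: field_simps)
  also have "\<dots> \<le> 2 ^ m" unfolding a_def V_def by (rule degree_bound_le_power_two[OF m])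
  also have "\<dots> \<le> real (card (Omega K))"
    using card_Omega_ge[of K] unfolding m_def by (metis of_nat_le_iff of_nat_numeral of_nat_power)
  also note card_S
  finally have "1 + a / F \<le> real (card S)"
    by (rule mult_right_le_imp_le) (use FV in linarith)
  moreover have "orbit_separated K (real m / 17) S"
    unfolding orbit_separated_def using indep le_Min_dH_Tperm by blast
  ultimately show ?thesis using S unfolding a_def F_def by blast
qed

theorem mainTheorem18:
  fixes K :: nat
  assumes "K choose 2 \<ge> 8"
  shows "\<exists>\<Omega>'' \<subseteq> Omega K.
           zeroVec \<in> \<Omega>'' \<and>
           (\<forall>w1\<in>\<Omega>''. \<forall>w2\<in>\<Omega>''. w1 \<noteq> w2 \<longrightarrow>
              real (Min {dH K (Tperm K \<sigma> w1) w2 | \<sigma>. \<sigma> permutes {1..K}})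
                \<ge> real (K choose 2) / 17) \<and>
           real (card \<Omega>'') \<ge> 1 + 2 powr (real (K choose 2) / 8) / fact K"
proof (cases "2 powr (real (K choose 2) / 8) \<le> fact K")
  case True
  have "0 < K choose 2" using assms by linarith
  moreover have "real (K choose 2) / 17 \<le> real (K choose 2)" by simp
  ultimately obtain S where S: "S \<subseteq> Omega K" "zeroVec \<in> S"
    "orbit_separated K (real (K choose 2) / 17) S" and "card S = 2"
    using exists_two_point_orbit_separated by blast
  moreover have "1 + 2 powr (real (K choose 2) / 8) / fact K \<le> 2" using True by simp
  ultimately show ?thesis unfolding orbit_separated_def by (intro exI[of _ S]) simp
next
  case False
  then show ?thesis
    using exists_large_orbit_separated[of K] assms unfolding orbit_separated_def not_le by blast
qed

end
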